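(* Let $\varphi\in C_0^\infty(\mathbb{R}^d)$ be a radial non-negative function supported in the unit ball, decreasing as the radius grows, with $\varphi(x)=1$ for $|x|\leq\frac34$. Let $\mu$ be a positive Borel measure on $\mathbb{R}^d$ such that $\mu(B_r(x))\leq r^{\alpha}$ for every open ball $B_r(x)$. Let $\nu$ be a signed measure absolutely continuous with respect to $\mu$. Then there is a constant $C$ such that for every disjoint family $\mathfrak{B}$ of open balls, $$\sum_{B_{r_j}(x_j)\in\mathfrak{B}}\left|\int\varphi\Big(\frac{y-x_j}{r_j}\Big)\,d\nu(y)\right|\leq C\, g\Big(\sum_{B_{r_j}(x_j)\in\mathfrak{B}} r_j^{\alpha}\Big),\qquad g(t)=\int_0^t\Big|\frac{d\nu}{d\mu}\Big|^*(s)\,ds.$$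
   Context: $\frac{d\nu}{d\mu}$ is the density of $\nu$ with respect to $\mu$. For a function $F$, its monotonic rearrangement (with respect to $\mu$) is $F^*(t)=\sup\{\beta : \mu\{x : F(x)>\beta\}\leq t\}$. A disjoint family of balls is one in which no two balls intersect. *)

theory Defs
  imports "HOL-Analysis.Analysis"
begin

text \<open>C-infinity functions on a Euclidean space: differentiable everywhere and every
  directional derivative is again C-infinity (greatest fixed point).\<close>
coinductive smooth_fun :: "('a::euclidean_space \<Rightarrow> real) \<Rightarrow> bool" where
  "(\<forall>x. f differentiable (at x)) \<Longrightarrow>
   (\<forall>v. smooth_fun (\<lambda>x. frechet_derivative f (at x) v)) \<Longrightarrow> smooth_fun f"

definition rearrangement :: "'a measure \<Rightarrow> ('a \<Rightarrow> real) \<Rightarrow> real \<Rightarrow> ennreal" where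
  "rearrangement M F t =
     (INF \<beta> \<in> {\<beta>::real. 0 \<le> \<beta> \<and> emeasure M {x \<in> space M. F x > \<beta>} \<le> ennreal t}. ennreal \<beta>)"

definition rearr_integral :: "'a measure \<Rightarrow> ('a \<Rightarrow> real) \<Rightarrow> ennreal \<Rightarrow> ennreal" where
  "rearr_integral M f T =
     (\<integral>\<^sup>+ s. indicator {s. 0 \<le> s \<and> ennreal s \<le> T} s * rearrangement M (\<lambda>x. \<bar>f x\<bar>) s \<partial>lborel)"

end

theory Submission
  imports Defs
begin

(* Since 0 \<le> \<phi> \<le> 1 vanishes outside the unit ball, the term of a ball B is at most the
  integral of |f| over B, so for a finite disjoint family the sum is at most the integral of |f|
  over the union E, where \<mu>(E) \<le> \<Sum> r^\<alpha>.  The Hardy-Littlewood inequality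
  int_E |f| d\<mu> \<le> int_0^\<mu>(E) |f|*(s) ds then gives the claim with C = 1.  It follows by comparing
  layer-cake representations: if E \<inter> {|f| \<ge> \<beta>} has measure m, then |f|* \<ge> \<beta> on [0, m).
  Infinite families are exhausted by their finite subfamilies. *)

lemma borel_measurable_antimono:
  fixes g :: "real \<Rightarrow> 'b::{linorder_topology, second_countable_topology}"
  assumes "antimono g"
  shows "g \<in> borel_measurable borel"
proof (rule borel_measurableI_greater)
  fix y
  have "is_interval {x. y < g x}"
    unfolding is_interval_1 using assms by (auto dest: antimonoD intro: less_le_trans)
  then show "{x \<in> space borel. y < g x} \<in> sets borel"
    using real_interval_borel_measurable by simp
qed

lemma emeasure_lborel_greaterThan: "emeasure lborel {a::real<..} = \<infinity>"
proof (rule ccontr)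
  assume "emeasure lborel {a<..} \<noteq> \<infinity>"
  then obtain t where "0 \<le> t" and t: "emeasure lborel {a<..} = ennreal t"
    by (cases "emeasure lborel {a<..}") auto
  have "ennreal (t + 1) = emeasure lborel {a<..a + (t + 1)}"
    using \<open>0 \<le> t\<close> by simp
  also have "\<dots> \<le> ennreal t"
    unfolding t[symmetric] by (rule emeasure_mono) auto
  finally show False
    using \<open>0 \<le> t\<close> by (simp add: ennreal_le_iff)
qed

lemma emeasure_lborel_ennreal_Ioc: "emeasure lborel {s. 0 < s \<and> ennreal s \<le> m} = m"
proof (cases m)
  case (real t)
  then have "{s. 0 < s \<and> ennreal s \<le> m} = {0<..t}" by auto
  then show ?thesis using real by simp
next
  case top
  then have "{s. 0 < s \<and> ennreal s \<le> m} = {0<..}" by auto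
  then show ?thesis using top emeasure_lborel_greaterThan by simp
qed

lemma emeasure_lborel_ennreal_Ico: "emeasure lborel {s. 0 \<le> s \<and> ennreal s < m} = m"
proof (cases m)
  case (real t)
  then have "{s. 0 \<le> s \<and> ennreal s < m} = {0..<t}" by (auto simp: ennreal_less_iff)
  then show ?thesis using real by simp
next
  case top
  then have "{s. 0 \<le> s \<and> ennreal s < m} = {0..}" by auto
  moreover have "emeasure lborel {0::real<..} \<le> emeasure lborel {0::real..}"
    by (rule emeasure_mono) auto
  ultimately show ?thesis using top emeasure_lborel_greaterThan by (simp add: top_unique)
qed

lemma nn_integral_layer_cake:
  fixes g :: "'a \<Rightarrow> ennreal"
  assumes "sigma_finite_measure M" and [measurable]: "g \<in> borel_measurable M"
  shows "(\<integral>\<^sup>+x. g x \<partial>M)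
    = (\<integral>\<^sup>+\<beta>. indicator {0<..} \<beta> * emeasure M {x \<in> space M. ennreal \<beta> \<le> g x} \<partial>lborel)"
proof -
  (* Integrating over \<beta> > 0 only, rather than \<beta> \<ge> 0, makes the level set at \<beta> ignore the
    zeros of g. *)
  interpret pair_sigma_finite M lborel
    using assms(1) by (simp add: pair_sigma_finite_def lborel.sigma_finite_measure_axioms)
  have "(\<integral>\<^sup>+x. g x \<partial>M) = (\<integral>\<^sup>+x. (\<integral>\<^sup>+\<beta>. indicator {\<beta>. 0 < \<beta> \<and> ennreal \<beta> \<le> g x} \<beta> \<partial>lborel) \<partial>M)"
    by (simp add: emeasure_lborel_ennreal_Ioc)
  also have "\<dots> = (\<integral>\<^sup>+\<beta>. (\<integral>\<^sup>+x. indicator {\<beta>. 0 < \<beta> \<and> ennreal \<beta> \<le> g x} \<beta> \<partial>M) \<partial>lborel)"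
    by (rule Fubini'[symmetric, where f = "\<lambda>x \<beta>. indicator {\<beta>. 0 < \<beta> \<and> ennreal \<beta> \<le> g x} \<beta>"]) measurable
  also have "\<dots> = (\<integral>\<^sup>+\<beta>. indicator {0<..} \<beta> * emeasure M {x \<in> space M. ennreal \<beta> \<le> g x} \<partial>lborel)"
  proof (rule nn_integral_cong)
    fix \<beta> :: real
    have "(\<integral>\<^sup>+x. indicator {\<beta>. 0 < \<beta> \<and> ennreal \<beta> \<le> g x} \<beta> \<partial>M)
        = (\<integral>\<^sup>+x. indicator {0<..} \<beta> * indicator {x \<in> space M. ennreal \<beta> \<le> g x} x \<partial>M)"
      by (rule nn_integral_cong) (auto simp: indicator_def)
    then show "(\<integral>\<^sup>+x. indicator {\<beta>. 0 < \<beta> \<and> ennreal \<beta> \<le> g x} \<beta> \<partial>M)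
        = indicator {0<..} \<beta> * emeasure M {x \<in> space M. ennreal \<beta> \<le> g x}"
      by (simp add: nn_integral_cmult_indicator)
  qed
  finally show ?thesis .
qed

lemma rearrangement_antimono: "antimono (rearrangement M F)"
  unfolding rearrangement_def
  by (intro antimonoI INF_superset_mono) (auto intro: order_trans[OF _ ennreal_leI])

lemma borel_measurable_rearrangement[measurable]: "rearrangement M F \<in> borel_measurable borel"
  by (rule borel_measurable_antimono[OF rearrangement_antimono])

lemma ennreal_le_rearrangement:
  assumes [measurable]: "F \<in> borel_measurable M"
    and less: "ennreal s < emeasure M {x \<in> space M. \<beta> \<le> F x}"
  shows "ennreal \<beta> \<le> rearrangement M F s"
  unfolding rearrangement_def
proof (rule INF_greatest)
  fix \<gamma> assume \<gamma>: "\<gamma> \<in> {\<gamma>. 0 \<le> \<gamma> \<and> emeasure M {x \<in> space M. F x > \<gamma>} \<le> ennreal s}"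
  show "ennreal \<beta> \<le> ennreal \<gamma>"
  proof (rule ccontr)
    assume "\<not> ennreal \<beta> \<le> ennreal \<gamma>"
    then have "\<gamma> < \<beta>" using \<gamma> by (auto simp: not_le ennreal_less_iff)
    then have "emeasure M {x \<in> space M. \<beta> \<le> F x} \<le> emeasure M {x \<in> space M. F x > \<gamma>}"
      by (intro emeasure_mono) auto
    then show False using \<gamma> less by auto
  qed
qed

lemma emeasure_superlevel_le_rearrangement:
  assumes [measurable]: "F \<in> borel_measurable M" "E \<in> sets M" and ET: "emeasure M E \<le> T"
  shows "emeasure M (E \<inter> {x \<in> space M. \<beta> \<le> F x})
    \<le> emeasure lborel {s. 0 \<le> s \<and> ennreal s \<le> T \<and> ennreal \<beta> \<le> rearrangement M F s}"
proof -
  let ?m = "emeasure M (E \<inter> {x \<in> space M. \<beta> \<le> F x})"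
  have "?m \<le> T"
    using emeasure_mono[of "E \<inter> {x \<in> space M. \<beta> \<le> F x}" E M] ET by auto
  moreover have "?m \<le> emeasure M {x \<in> space M. \<beta> \<le> F x}"
    by (rule emeasure_mono) auto
  ultimately have "{s. 0 \<le> s \<and> ennreal s < ?m}
      \<subseteq> {s. 0 \<le> s \<and> ennreal s \<le> T \<and> ennreal \<beta> \<le> rearrangement M F s}"
    by (auto intro!: ennreal_le_rearrangement)
  then have "emeasure lborel {s. 0 \<le> s \<and> ennreal s < ?m}
      \<le> emeasure lborel {s. 0 \<le> s \<and> ennreal s \<le> T \<and> ennreal \<beta> \<le> rearrangement M F s}"
    by (rule emeasure_mono) measurable
  then show ?thesis by (simp add: emeasure_lborel_ennreal_Ico)
qed

lemma rearr_integral_mono: "T \<le> T' \<Longrightarrow> rearr_integral M f T \<le> rearr_integral M f T'"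
  unfolding rearr_integral_def
  by (intro nn_integral_mono) (auto simp: indicator_def intro: order_trans)

lemma nn_integral_indicator_abs_le_rearr_integral:
  assumes [measurable]: "f \<in> borel_measurable M" "E \<in> sets M"
    and ET: "emeasure M E \<le> T" and E_fin: "emeasure M E < \<infinity>"
  shows "(\<integral>\<^sup>+x. indicator E x * ennreal \<bar>f x\<bar> \<partial>M) \<le> rearr_integral M f T"
proof -
  define R where "R = rearrangement M (\<lambda>x. \<bar>f x\<bar>)"
  define S where "S = {s. 0 \<le> s \<and> ennreal s \<le> T}"
  (* M need not be \<sigma>-finite, but the layer-cake formula needs Fubini; so pass to the finite
    measure M restricted to E. *)
  define N where "N = density M (indicator E)"
  have [measurable]: "S \<in> sets borel" "R \<in> borel_measurable borel"
    unfolding S_def R_def by measurable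
  have sets_N [measurable_cong]: "sets N = sets M"
    unfolding N_def by simp
  have "emeasure N (space N) = emeasure M E"
    unfolding N_def by (simp add: emeasure_restricted)
  then have "finite_measure N"
    using E_fin by (intro finite_measureI) auto
  have "(\<integral>\<^sup>+x. indicator E x * ennreal \<bar>f x\<bar> \<partial>M) = (\<integral>\<^sup>+x. ennreal \<bar>f x\<bar> \<partial>N)"
    unfolding N_def by (simp add: nn_integral_density)
  also have "\<dots> = (\<integral>\<^sup>+\<beta>. indicator {0<..} \<beta> * emeasure N {x \<in> space N. ennreal \<beta> \<le> ennreal \<bar>f x\<bar>} \<partial>lborel)"
    using \<open>finite_measure N\<close> by (intro nn_integral_layer_cake) (auto simp: finite_measure_def)
  also have "\<dots> = (\<integral>\<^sup>+\<beta>. indicator {0<..} \<beta> * emeasure M (E \<inter> {x \<in> space M. \<beta> \<le> \<bar>f x\<bar>}) \<partial>lborel)"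
    unfolding N_def by (intro nn_integral_cong) (simp add: emeasure_restricted)
  also have "\<dots> \<le> (\<integral>\<^sup>+\<beta>. indicator {0<..} \<beta> * emeasure lborel {s. 0 \<le> s \<and> ennreal s \<le> T \<and> ennreal \<beta> \<le> R s} \<partial>lborel)"
    unfolding R_def
    by (intro nn_integral_mono mult_left_mono emeasure_superlevel_le_rearrangement ET) auto
  also have "\<dots> = (\<integral>\<^sup>+\<beta>. indicator {0<..} \<beta> * emeasure lborel {s \<in> space lborel. ennreal \<beta> \<le> indicator S s * R s} \<partial>lborel)"
  proof (rule nn_integral_cong)
    fix \<beta> :: real
    have "{s \<in> space lborel. ennreal \<beta> \<le> indicator S s * R s}
        = {s. 0 \<le> s \<and> ennreal s \<le> T \<and> ennreal \<beta> \<le> R s}" if "0 < \<beta>"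
      using that by (auto simp: S_def indicator_def)
    then show "indicator {0<..} \<beta> * emeasure lborel {s. 0 \<le> s \<and> ennreal s \<le> T \<and> ennreal \<beta> \<le> R s}
        = indicator {0<..} \<beta> * emeasure lborel {s \<in> space lborel. ennreal \<beta> \<le> indicator S s * R s}"
      by (cases "0 < \<beta>") auto
  qed
  also have "\<dots> = (\<integral>\<^sup>+s. indicator S s * R s \<partial>lborel)"
    by (rule nn_integral_layer_cake[symmetric]) (auto simp: lborel.sigma_finite_measure_axioms)
  also have "\<dots> = rearr_integral M f T"
    unfolding rearr_integral_def R_def S_def ..
  finally show ?thesis .
qed

lemma abs_integral_bump_le_nn_integral_ball:
  fixes \<phi> :: "'a::real_normed_vector \<Rightarrow> real"
  assumes \<phi>_nonneg: "\<And>z. 0 \<le> \<phi> z" and \<phi>_le_one: "\<And>z. \<phi> z \<le> 1"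
    and \<phi>_supp: "\<And>z. 1 \<le> norm z \<Longrightarrow> \<phi> z = 0" and "0 < r"
  shows "ennreal \<bar>\<integral>y. \<phi> ((1 / r) *\<^sub>R (y - x)) * f y \<partial>M\<bar>
    \<le> (\<integral>\<^sup>+y. indicator (ball x r) y * ennreal \<bar>f y\<bar> \<partial>M)"
proof (cases "integrable M (\<lambda>y. \<phi> ((1 / r) *\<^sub>R (y - x)) * f y)")
  case True
  have "ennreal \<bar>\<integral>y. \<phi> ((1 / r) *\<^sub>R (y - x)) * f y \<partial>M\<bar>
      \<le> (\<integral>\<^sup>+y. norm (\<phi> ((1 / r) *\<^sub>R (y - x)) * f y) \<partial>M)"
    using integral_norm_bound_ennreal[OF True] by simp
  also have "\<dots> \<le> (\<integral>\<^sup>+y. indicator (ball x r) y * ennreal \<bar>f y\<bar> \<partial>M)"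
  proof (rule nn_integral_mono)
    fix y
    show "ennreal (norm (\<phi> ((1 / r) *\<^sub>R (y - x)) * f y)) \<le> indicator (ball x r) y * ennreal \<bar>f y\<bar>"
    proof (cases "y \<in> ball x r")
      case True
      have "\<bar>\<phi> ((1 / r) *\<^sub>R (y - x)) * f y\<bar> \<le> \<bar>f y\<bar>"
        using \<phi>_le_one \<phi>_nonneg by (simp add: abs_mult mult_left_le_one_le)
      then show ?thesis using True by (simp add: ennreal_leI)
    next
      case False
      then have "1 \<le> norm ((1 / r) *\<^sub>R (y - x))"
        using \<open>0 < r\<close> by (simp add: dist_norm norm_minus_commute divide_simps)
      then show ?thesis using False \<phi>_supp by simp
    qed
  qed
  finally show ?thesis .
next
  case False
  then show ?thesis by (simp add: not_integrable_integral_eq)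
qed

lemma sum_bump_integrals_le_rearr_integral:
  fixes \<phi> :: "'a::real_normed_vector \<Rightarrow> real" and \<B> :: "('a \<times> real) set"
  assumes \<phi>_nonneg: "\<And>z. 0 \<le> \<phi> z" and \<phi>_le_one: "\<And>z. \<phi> z \<le> 1"
    and \<phi>_supp: "\<And>z. 1 \<le> norm z \<Longrightarrow> \<phi> z = 0"
    and sets_M: "sets M = sets borel"
    and M_balls: "\<And>x r. 0 < r \<Longrightarrow> emeasure M (ball x r) \<le> ennreal (r powr \<alpha>)"
    and [measurable]: "f \<in> borel_measurable M"
    and "finite \<B>" and pos: "\<forall>(x, r) \<in> \<B>. 0 < r"
    and disj: "disjoint_family_on (\<lambda>(x, r). ball x r) \<B>"
  shows "(\<Sum>(x, r) \<in> \<B>. ennreal \<bar>\<integral>y. \<phi> ((1 / r) *\<^sub>R (y - x)) * f y \<partial>M\<bar>)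
    \<le> rearr_integral M f (\<Sum>(x, r) \<in> \<B>. ennreal (r powr \<alpha>))"
proof -
  define E where "E = (\<Union>(x, r) \<in> \<B>. ball x r)"
  have balls_sets: "ball x r \<in> sets M" for x r
    by (simp add: sets_M)
  have [measurable]: "E \<in> sets M"
    unfolding E_def using \<open>finite \<B>\<close> balls_sets by (intro sets.finite_UN) auto
  have "emeasure M E \<le> (\<Sum>(x, r) \<in> \<B>. emeasure M (ball x r))"
    unfolding E_def using \<open>finite \<B>\<close> balls_sets
    by (simp add: case_prod_beta) (rule emeasure_subadditive_finite, auto)
  also have "\<dots> \<le> (\<Sum>(x, r) \<in> \<B>. ennreal (r powr \<alpha>))"
    using pos M_balls by (intro sum_mono) auto
  finally have E_le: "emeasure M E \<le> (\<Sum>(x, r) \<in> \<B>. ennreal (r powr \<alpha>))" .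
  have "(\<Sum>(x, r) \<in> \<B>. ennreal \<bar>\<integral>y. \<phi> ((1 / r) *\<^sub>R (y - x)) * f y \<partial>M\<bar>)
      \<le> (\<Sum>(x, r) \<in> \<B>. (\<integral>\<^sup>+y. indicator (ball x r) y * ennreal \<bar>f y\<bar> \<partial>M))"
    using pos \<phi>_nonneg \<phi>_le_one \<phi>_supp
    by (intro sum_mono) (auto intro!: abs_integral_bump_le_nn_integral_ball)
  also have "\<dots> = (\<integral>\<^sup>+y. (\<Sum>(x, r) \<in> \<B>. indicator (ball x r) y * ennreal \<bar>f y\<bar>) \<partial>M)"
    using balls_sets by (subst nn_integral_sum) (auto simp: case_prod_beta)
  also have "\<dots> = (\<integral>\<^sup>+y. indicator E y * ennreal \<bar>f y\<bar> \<partial>M)"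
    unfolding E_def indicator_UN_disjoint[OF \<open>finite \<B>\<close> disj]
    by (simp add: case_prod_beta sum_distrib_right)
  also have "\<dots> \<le> rearr_integral M f (\<Sum>(x, r) \<in> \<B>. ennreal (r powr \<alpha>))"
  proof (rule nn_integral_indicator_abs_le_rearr_integral[OF _ _ E_le])
    have "(\<Sum>(x, r) \<in> \<B>. ennreal (r powr \<alpha>)) < \<infinity>"
      by (simp add: case_prod_beta sum_Pinfty less_top)
    with E_le show "emeasure M E < \<infinity>" by order
  qed auto
  finally show ?thesis .
qed

lemma infsum_bump_integrals_le_rearr_integral:
  fixes \<phi> :: "'a::real_normed_vector \<Rightarrow> real" and \<B> :: "('a \<times> real) set"
  assumes \<phi>_nonneg: "\<And>z. 0 \<le> \<phi> z" and \<phi>_le_one: "\<And>z. \<phi> z \<le> 1"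
    and \<phi>_supp: "\<And>z. 1 \<le> norm z \<Longrightarrow> \<phi> z = 0"
    and sets_M: "sets M = sets borel"
    and M_balls: "\<And>x r. 0 < r \<Longrightarrow> emeasure M (ball x r) \<le> ennreal (r powr \<alpha>)"
    and f: "f \<in> borel_measurable M"
    and pos: "\<forall>(x, r) \<in> \<B>. 0 < r"
    and disj: "disjoint_family_on (\<lambda>(x, r). ball x r) \<B>"
  shows "(\<Sum>\<^sub>\<infinity>(x, r) \<in> \<B>. ennreal \<bar>\<integral>y. \<phi> ((1 / r) *\<^sub>R (y - x)) * f y \<partial>M\<bar>)
    \<le> rearr_integral M f (\<Sum>\<^sub>\<infinity>(x, r) \<in> \<B>. ennreal (r powr \<alpha>))"
proof (rule infsum_le_finite_sums)
  let ?b = "\<lambda>(x::'a, r). ennreal (r powr \<alpha>)"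
  fix F assume F: "finite F" "F \<subseteq> \<B>"
  have "(\<Sum>(x, r) \<in> F. ennreal \<bar>\<integral>y. \<phi> ((1 / r) *\<^sub>R (y - x)) * f y \<partial>M\<bar>) \<le> rearr_integral M f (sum ?b F)"
    using F pos disjoint_family_on_mono[OF F(2) disj]
    by (intro sum_bump_integrals_le_rearr_integral[OF \<phi>_nonneg \<phi>_le_one \<phi>_supp sets_M M_balls f]) auto
  also have "\<dots> \<le> rearr_integral M f (infsum ?b \<B>)"
    using F infsum_mono_neutral[of ?b F ?b \<B>]
    by (intro rearr_integral_mono) (auto simp: nonneg_summable_on_complete)
  finally show "(\<Sum>(x, r) \<in> F. ennreal \<bar>\<integral>y. \<phi> ((1 / r) *\<^sub>R (y - x)) * f y \<partial>M\<bar>)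
      \<le> rearr_integral M f (infsum ?b \<B>)" .
qed (simp add: nonneg_summable_on_complete)

theorem lemma16:
  fixes \<phi> :: "'a::euclidean_space \<Rightarrow> real"
    and \<mu> :: "'a measure"
    and \<alpha> :: real
    and f :: "'a \<Rightarrow> real"
  assumes phi_smooth: "smooth_fun \<phi>"
    and phi_radial: "\<And>x y. norm x = norm y \<Longrightarrow> \<phi> x = \<phi> y"
    and phi_nonneg: "\<And>x. \<phi> x \<ge> 0"
    and phi_decr: "\<And>x y. norm x \<le> norm y \<Longrightarrow> \<phi> y \<le> \<phi> x"
    and phi_supp: "\<And>x. norm x \<ge> 1 \<Longrightarrow> \<phi> x = 0"
    and phi_one: "\<And>x. norm x \<le> 3/4 \<Longrightarrow> \<phi> x = 1"
    and mu_borel: "sets \<mu> = sets borel"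
    and mu_balls: "\<And>x r. r > 0 \<Longrightarrow> emeasure \<mu> (ball x r) \<le> ennreal (r powr \<alpha>)"
    and nu_density: "f \<in> borel_measurable \<mu>" "integrable \<mu> f"
  shows "\<exists>C::real. \<forall>\<B> :: ('a \<times> real) set.
           (\<forall>(x, r) \<in> \<B>. r > 0) \<longrightarrow>
           (\<forall>(x, r) \<in> \<B>. \<forall>(x', r') \<in> \<B>. (x, r) \<noteq> (x', r') \<longrightarrow> ball x r \<inter> ball x' r' = {}) \<longrightarrow>
           (\<Sum>\<^sub>\<infinity>(x, r) \<in> \<B>. ennreal \<bar>\<integral>y. \<phi> ((1 / r) *\<^sub>R (y - x)) * f y \<partial>\<mu>\<bar>)
             \<le> ennreal C * rearr_integral \<mu> f (\<Sum>\<^sub>\<infinity>(x, r) \<in> \<B>. ennreal (r powr \<alpha>))"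
proof (intro exI[of _ 1] allI impI)
  fix \<B> :: "('a \<times> real) set"
  assume pos: "\<forall>(x, r) \<in> \<B>. r > 0"
    and disj: "\<forall>(x, r) \<in> \<B>. \<forall>(x', r') \<in> \<B>. (x, r) \<noteq> (x', r') \<longrightarrow> ball x r \<inter> ball x' r' = {}"
  have "disjoint_family_on (\<lambda>(x, r). ball x r) \<B>"
    using disj unfolding disjoint_family_on_def by fast
  moreover have "\<phi> z \<le> 1" for z
    using phi_decr[of 0 z] phi_one[of 0] by simp
  ultimately show "(\<Sum>\<^sub>\<infinity>(x, r) \<in> \<B>. ennreal \<bar>\<integral>y. \<phi> ((1 / r) *\<^sub>R (y - x)) * f y \<partial>\<mu>\<bar>)
      \<le> ennreal 1 * rearr_integral \<mu> f (\<Sum>\<^sub>\<infinity>(x, r) \<in> \<B>. ennreal (r powr \<alpha>))"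
    using infsum_bump_integrals_le_rearr_integral[OF phi_nonneg _ phi_supp mu_borel mu_balls nu_density(1) pos]
    by simp
qed

end
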